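(* With the sets $E_n$ defined in the context, there is a constant $c>0$ independent of $n$ such that for every $n\ge2$, $$\mathrm{Fav}(E_n)\ \ge\ c\Big(\sum_{k=1}^{n-1}a_k\Big)^{-1}.$$
   Context: Construction. Let $f:\mathbb{R}\to\mathbb{R}$ be $f(x)=0$ for $x\in[0,\tfrac12)+\mathbb{Z}$ and $f(x)=\tfrac34$ for $x\in[\tfrac12,1)+\mathbb{Z}$. Let $g:\mathbb{N}\to\mathbb{R}_+$ be strictly increasing with $g(k)\to\infty$, and set $a_1=g(1)$, $a_k=\min\{1,g(k)-g(k-1)\}$ for $k\ge2$. Let $(m_k)_{k\ge1}$ be positive integers with $m_k>m_{k-1}$, $1000\cdot4^{-m_k}\le a_k4^{-m_{k-1}}$ and $1000\cdot4^{-m_k}\le a_{k-1}4^{-m_{k-1}}$ for all $k\ge2$. For $n\ge1$ define $f_n:[0,1]\to\mathbb{R}$ by $f_n(x)=f(2x)+\sum_{j=1}^{n}a_j4^{-m_j}f(2\cdot4^{m_j}x)$, let $s_n=\{0\}\times[0,4^{-m_n}]$, and $E_n=\overline{s_n+\operatorname{graph}f_n}$ (Minkowski sum, closure). Favard length: $\mathrm{Fav}(E)=\frac{1}{|S^1|}\int_{S^1}|p_\theta(E)|\,d\theta$ with $p_\theta(x)=x\cdot\theta$. *)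

theory Defs
  imports "HOL-Analysis.Analysis"
begin

definition step_f :: "real \<Rightarrow> real" where
  "step_f x = (if frac x < 1/2 then 0 else 3/4)"

definition a_seq :: "(nat \<Rightarrow> real) \<Rightarrow> nat \<Rightarrow> real" where
  "a_seq g k = (if k = 1 then g 1 else min 1 (g k - g (k - 1)))"

definition f_n :: "(nat \<Rightarrow> real) \<Rightarrow> (nat \<Rightarrow> nat) \<Rightarrow> nat \<Rightarrow> real \<Rightarrow> real" where
  "f_n g m n x = step_f (2 * x)
      + (\<Sum>j = 1..n. a_seq g j * (1 / 4 ^ m j) * step_f (2 * 4 ^ m j * x))"

text \<open>E_n = closure (s_n + graph f_n), with s_n = {0} x [0, 4^{-m_n}], graph over [0,1].\<close>
definition E_set :: "(nat \<Rightarrow> real) \<Rightarrow> (nat \<Rightarrow> nat) \<Rightarrow> nat \<Rightarrow> (real \<times> real) set" where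
  "E_set g m n = closure {(x, f_n g m n x + s) | x s.
      x \<in> {0..1} \<and> s \<in> {0..1 / 4 ^ m n}}"

definition proj_dir :: "real \<Rightarrow> real \<times> real \<Rightarrow> real" where
  "proj_dir t p = fst p * cos t + snd p * sin t"

text \<open>Favard length: (1/|S^1|) \<integral>_{S^1} |p_theta(E)| d theta, with |S^1| = 2 pi,
  parametrising S^1 by t \<in> [0, 2 pi].\<close>
definition favard_length :: "(real \<times> real) set \<Rightarrow> ennreal" where
  "favard_length E = ennreal (1 / (2 * pi)) *
     (\<integral>\<^sup>+ t. indicator {0..2*pi} t * emeasure lborel (proj_dir t ` E) \<partial>lborel)"

end

theory Submission
  imports Defs
begin

text \<open>Write f_n(x) = \<Sum>_{j=0..n} b_j 4^(-\<mu>_j) f(2 4^\<mu>_j x) with b_0 = 1, \<mu>_0 = 0.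
  On the grid of mesh 4^(-m_n-1) every term is constant, and each term increases except for
  periodic drops of size (3/4) b_j 4^(-\<mu>_j). For a small angle t, call a cell safe if no
  term drops within about t times its drop size (in units of the mesh); counting shows that
  at least half of the cells are safe once 48 t \<Sum>_j b_j \<le> 1. The lacunarity condition makes
  the drop sizes decay geometrically, so between two safe cells f_n loses at most 3/(16 t)
  times their distance. Hence the projections of the graph pieces over safe cells are
  disjoint intervals, and the projection in every direction t \<le> 1/(48 \<Sum>_j b_j) has length
  at least 1/8. Averaging over directions gives Fav(E_n) \<ge> 1/(768 \<pi> \<Sum>_j b_j), and
  \<Sum>_j b_j = 1 + \<Sum>_{k\<le>n} a_k is comparable to \<Sum>_{k<n} a_k.\<close>

lemma sum_halving_le:
  fixes R :: "nat \<Rightarrow> real"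
  assumes "\<And>j. i \<le> j \<Longrightarrow> 0 \<le> R j" and "\<And>j. i \<le> j \<Longrightarrow> R (Suc j) \<le> R j / 2"
  shows "(\<Sum>j = i..n. R j) \<le> 2 * R i"
proof -
  have "i \<le> n \<Longrightarrow> (\<Sum>j = i..n. R j) + R n \<le> 2 * R i"
  proof (induction n)
    case (Suc n)
    show ?case
    proof (cases "i = Suc n")
      case False
      with Suc have "(\<Sum>j = i..n. R j) + R n \<le> 2 * R i" "R (Suc n) \<le> R n / 2" "i \<le> n"
        using assms(2) by auto
      then show ?thesis by simp
    qed simp
  qed simp
  then show ?thesis using assms(1) by (cases "i \<le> n") force+
qed

lemma sum_halving_bounded:
  fixes R :: "nat \<Rightarrow> real"
  assumes nonneg: "\<And>j. 0 \<le> R j" and halving: "\<And>j. 1 \<le> j \<Longrightarrow> R (Suc j) \<le> R j / 2"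
    and "finite J" and bounded: "\<And>j. j \<in> J \<Longrightarrow> R j \<le> D" and "0 \<le> D"
  shows "(\<Sum>j\<in>J. R j) \<le> 3 * D"
proof -
  have sum_pos: "(\<Sum>j\<in>J - {0}. R j) \<le> 2 * D"
  proof (cases "J - {0} = {}")
    case True
    then show ?thesis using \<open>0 \<le> D\<close> by (metis sum.empty mult_nonneg_nonneg zero_le_numeral)
  next
    case False
    define i where "i = Min (J - {0})"
    have "i \<in> J - {0}" unfolding i_def using False \<open>finite J\<close> by (intro Min_in) auto
    have "J - {0} \<subseteq> {i..Max J}"
      unfolding i_def using \<open>finite J\<close> by (auto intro!: Min_le Max_ge)
    then have "(\<Sum>j\<in>J - {0}. R j) \<le> (\<Sum>j = i..Max J. R j)"
      using nonneg by (intro sum_mono2) auto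
    also have "\<dots> \<le> 2 * R i"
      using \<open>i \<in> J - {0}\<close> by (intro sum_halving_le nonneg halving) auto
    finally show ?thesis using bounded \<open>i \<in> J - {0}\<close> by force
  qed
  have "(\<Sum>j\<in>J. R j) = (\<Sum>j\<in>J \<inter> {0}. R j) + (\<Sum>j\<in>J - {0}. R j)"
    using \<open>finite J\<close> by (metis sum.Int_Diff)
  moreover have "(\<Sum>j\<in>J \<inter> {0}. R j) \<le> D" by (cases "0 \<in> J") (auto simp: bounded \<open>0 \<le> D\<close>)
  ultimately show ?thesis using sum_pos by linarith
qed

lemma period_end_le_diff:
  fixes p q N :: nat
  assumes "p < q" "p div N \<noteq> q div N"
  shows "N - p mod N \<le> q - p"
proof -
  have "Suc (p div N) \<le> q div N" using assms div_le_mono[of p q N] by simp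
  then have "p div N * N + N \<le> q div N * N" by (metis mult_Suc mult_le_mono1 add.commute)
  also have "\<dots> \<le> q" by (simp add: div_times_less_eq_dividend)
  finally show ?thesis using div_mult_mod_eq[of p N] by linarith
qed

lemma card_near_top_le:
  fixes N :: nat and \<rho> :: real
  assumes "0 \<le> \<rho>"
  shows "real (card {r. r < N \<and> real (N - r) < \<rho>}) \<le> \<rho>"
proof -
  define S where "S = {r. r < N \<and> real (N - r) < \<rho>}"
  have "inj_on (\<lambda>r. N - r) S" unfolding S_def by (auto simp: inj_on_def)
  moreover have "(\<lambda>r. N - r) ` S \<subseteq> {1..<nat \<lceil>\<rho>\<rceil>}"
  proof
    fix s assume "s \<in> (\<lambda>r. N - r) ` S"
    then obtain r where "r < N" "real (N - r) < \<rho>" "s = N - r" unfolding S_def by auto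
    moreover from this have "int s < \<lceil>\<rho>\<rceil>" by linarith
    ultimately show "s \<in> {1..<nat \<lceil>\<rho>\<rceil>}" by auto
  qed
  ultimately have "card S \<le> card {1..<nat \<lceil>\<rho>\<rceil>}"
    by (metis card_image card_mono finite_atLeastLessThan)
  then have "real (card S) \<le> real (nat \<lceil>\<rho>\<rceil> - 1)" by simp
  also have "\<dots> \<le> \<rho>" using assms by (simp add: of_nat_diff) linarith
  finally show ?thesis by (simp add: S_def)
qed

lemma card_near_period_end_le:
  fixes N P :: nat and \<rho> :: real
  assumes "0 \<le> \<rho>" "N dvd P" "N > 0"
  shows "real (card {p. p < P \<and> real (N - p mod N) < \<rho>}) \<le> real (P div N) * \<rho>"
proof -
  define S where "S = {r. r < N \<and> real (N - r) < \<rho>}"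
  have "finite S" unfolding S_def by auto
  have "{p. p < P \<and> real (N - p mod N) < \<rho>} \<subseteq> (\<lambda>(k, r). k * N + r) ` ({..<P div N} \<times> S)"
  proof
    fix p assume p: "p \<in> {p. p < P \<and> real (N - p mod N) < \<rho>}"
    then have "p div N < P div N" using assms(2,3)
      by (metis dvd_div_mult_self less_mult_imp_div_less mem_Collect_eq)
    moreover have "p mod N \<in> S" using p assms(3) by (simp add: S_def)
    ultimately show "p \<in> (\<lambda>(k, r). k * N + r) ` ({..<P div N} \<times> S)"
      by (force intro: image_eqI[where x = "(p div N, p mod N)"])
  qed
  then have "card {p. p < P \<and> real (N - p mod N) < \<rho>} \<le> card ({..<P div N} \<times> S)"
    using \<open>finite S\<close> by (meson card_image_le card_mono finite_SigmaI finite_imageI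
        finite_lessThan order_trans)
  also have "\<dots> = P div N * card S" by (simp add: card_cartesian_product)
  finally have "real (card {p. p < P \<and> real (N - p mod N) < \<rho>}) \<le> real (P div N) * real (card S)"
    by (metis of_nat_le_iff of_nat_mult)
  also have "\<dots> \<le> real (P div N) * \<rho>"
    using card_near_top_le[OF assms(1)] by (intro mult_left_mono) (simp_all add: S_def)
  finally show ?thesis .
qed

lemma small_angle_bounds:
  fixes t :: real
  assumes "0 \<le> t" "t \<le> 1"
  shows "1/2 \<le> cos t" "0 \<le> sin t" "sin t \<le> t"
proof -
  have "cos (pi/3) \<le> cos t" using assms pi_gt3 by (intro cos_monotone_0_pi_le) auto
  then show "1/2 \<le> cos t" by (simp add: cos_60)
  show "0 \<le> sin t" using assms pi_gt3 by (intro sin_ge_zero) auto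
  show "sin t \<le> t" using assms by (simp add: sin_x_le_x)
qed

section \<open>Lacunary step sums on a grid\<close>

lemma step_f_on_cell:
  fixes p K :: nat and u :: real
  assumes "K > 0" and lo: "real p / real (2 * K) \<le> u" and hi: "u < real (p + 1) / real (2 * K)"
  shows "step_f u = (if p mod (2 * K) < K then 0 else 3/4)"
proof -
  define N where "N = 2 * K"
  define q where "q = p div N"
  define r where "r = p mod N"
  have N0: "real N > 0" using \<open>K > 0\<close> by (simp add: N_def)
  have p_eq: "real p = real q * real N + real r"
    unfolding q_def r_def by (metis of_nat_add of_nat_mult div_mult_mod_eq)
  have "r < N" using \<open>K > 0\<close> unfolding r_def N_def by simp
  have lo': "real q + real r / real N \<le> u" and hi': "u < real q + (real r + 1) / real N"
    using lo hi p_eq N0 unfolding N_def[symmetric] by (simp_all add: field_simps)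
  have "(real r + 1) / real N \<le> 1" using \<open>r < N\<close> N0 by (simp add: field_simps)
  moreover have "real q \<le> u" using lo' by (smt (verit) divide_nonneg_nonneg of_nat_0_le_iff)
  ultimately have "floor u = int q" using hi' by (simp add: floor_eq_iff)
  then have frac_u: "frac u = u - real q" by (simp add: frac_def)
  show ?thesis
  proof (cases "r < K")
    case True
    then have "(real r + 1) / real N \<le> 1/2" using N0 unfolding N_def by (simp add: field_simps)
    then have "frac u < 1/2" using frac_u hi' by linarith
    then show ?thesis using True by (simp add: step_f_def r_def N_def)
  next
    case False
    then have "1/2 \<le> real r / real N" using N0 unfolding N_def by (simp add: field_simps)
    then have "\<not> frac u < 1/2" using frac_u lo' by linarith
    then show ?thesis using False by (simp add: step_f_def r_def N_def)
  qed
qed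

definition lacunary_sum :: "(nat \<Rightarrow> real) \<Rightarrow> (nat \<Rightarrow> nat) \<Rightarrow> nat \<Rightarrow> real \<Rightarrow> real" where
  "lacunary_sum b \<mu> n x = (\<Sum>j = 0..n. b j / 4 ^ \<mu> j * step_f (2 * 4 ^ \<mu> j * x))"

lemma lacunary_sum_bounds:
  assumes "\<And>j. 0 \<le> b j"
  shows "0 \<le> lacunary_sum b \<mu> n x" "lacunary_sum b \<mu> n x \<le> (\<Sum>j = 0..n. b j)"
proof -
  have term_bounds: "0 \<le> b j / 4 ^ \<mu> j * step_f y \<and> b j / 4 ^ \<mu> j * step_f y \<le> b j" for j y
  proof -
    have "0 \<le> step_f y" "step_f y \<le> 1" by (auto simp: step_f_def)
    moreover have "0 \<le> b j / 4 ^ \<mu> j" using assms[of j] by simp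
    ultimately have "b j / 4 ^ \<mu> j * step_f y \<le> b j / 4 ^ \<mu> j" by (metis mult_left_le)
    also have "\<dots> \<le> b j" using assms[of j] by (simp add: divide_le_eq mult_le_cancel_left1)
    finally show ?thesis using \<open>0 \<le> step_f y\<close> assms[of j] by simp
  qed
  show "0 \<le> lacunary_sum b \<mu> n x" "lacunary_sum b \<mu> n x \<le> (\<Sum>j = 0..n. b j)"
    unfolding lacunary_sum_def using term_bounds by (auto intro: sum_nonneg sum_mono)
qed

text \<open>Cell \<open>p\<close> is the interval \<open>[p / 4^(M+1), (p+1) / 4^(M+1))\<close>; in units of cells,
  the step function with exponent \<open>e \<le> M\<close> has period \<open>cell_period M e\<close>.\<close>
definition cell_period :: "nat \<Rightarrow> nat \<Rightarrow> nat" where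
  "cell_period M e = 2 * 4 ^ (M - e)"

definition cell_term :: "(nat \<Rightarrow> real) \<Rightarrow> (nat \<Rightarrow> nat) \<Rightarrow> nat \<Rightarrow> nat \<Rightarrow> nat \<Rightarrow> real" where
  "cell_term b \<mu> M j p =
     b j / 4 ^ \<mu> j * (if p mod cell_period M (\<mu> j) < 4 ^ (M - \<mu> j) then 0 else 3/4)"

definition cell_value :: "(nat \<Rightarrow> real) \<Rightarrow> (nat \<Rightarrow> nat) \<Rightarrow> nat \<Rightarrow> nat \<Rightarrow> nat \<Rightarrow> real" where
  "cell_value b \<mu> M n p = (\<Sum>j = 0..n. cell_term b \<mu> M j p)"

lemma step_f_on_grid:
  fixes x :: real
  assumes "e \<le> M" and lo: "real p / 4 ^ (M + 1) \<le> x" and hi: "x < (real p + 1) / 4 ^ (M + 1)"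
  shows "step_f (2 * 4 ^ e * x) = (if p mod cell_period M e < 4 ^ (M - e) then 0 else 3/4)"
proof -
  define K :: nat where "K = 4 ^ (M - e)"
  have "(4::real) ^ (M + 1) = 4 ^ e * 4 ^ (M - e) * 4"
    using \<open>e \<le> M\<close> by (simp flip: power_add)
  then have P: "(4::real) ^ (M + 1) = 4 ^ e * real K * 4" by (simp add: K_def)
  have "real p / real (2 * K) = 2 * 4 ^ e * (real p / 4 ^ (M + 1))"
    using P by (simp add: K_def field_simps)
  also have "\<dots> \<le> 2 * 4 ^ e * x" by (rule mult_left_mono[OF lo]) simp
  finally have A: "real p / real (2 * K) \<le> 2 * 4 ^ e * x" .
  have "2 * 4 ^ e * x < 2 * 4 ^ e * ((real p + 1) / 4 ^ (M + 1))"
    by (rule mult_strict_left_mono[OF hi]) simp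
  also have "\<dots> = real (p + 1) / real (2 * K)" using P by (simp add: K_def field_simps)
  finally have B: "2 * 4 ^ e * x < real (p + 1) / real (2 * K)" .
  show ?thesis
    using step_f_on_cell[OF _ A B] by (simp add: K_def cell_period_def)
qed

lemma lacunary_sum_on_cell:
  assumes "\<And>j. j \<le> n \<Longrightarrow> \<mu> j \<le> M"
    and "real p / 4 ^ (M + 1) \<le> x" and "x < (real p + 1) / 4 ^ (M + 1)"
  shows "lacunary_sum b \<mu> n x = cell_value b \<mu> M n p"
  unfolding lacunary_sum_def cell_value_def cell_term_def
  using assms by (auto intro!: sum.cong simp: step_f_on_grid)

lemma cell_period_mult: "e \<le> M \<Longrightarrow> cell_period M e * (2 * 4 ^ e) = 4 ^ (M + 1)"
  by (simp add: cell_period_def mult_ac flip: power_add)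

definition term_jump :: "(nat \<Rightarrow> real) \<Rightarrow> (nat \<Rightarrow> nat) \<Rightarrow> nat \<Rightarrow> real" where
  "term_jump b \<mu> j = 3/4 * b j / 4 ^ \<mu> j"

lemma cell_term_bounds:
  assumes "0 \<le> b j"
  shows "0 \<le> cell_term b \<mu> M j p" "cell_term b \<mu> M j p \<le> term_jump b \<mu> j"
  using assms by (auto simp: cell_term_def term_jump_def)

lemma cell_term_mono_in_period:
  assumes "0 \<le> b j" "p \<le> q" "p div cell_period M (\<mu> j) = q div cell_period M (\<mu> j)"
  shows "cell_term b \<mu> M j p \<le> cell_term b \<mu> M j q"
proof -
  have "p mod cell_period M (\<mu> j) \<le> q mod cell_period M (\<mu> j)"
    using assms(2,3) by (metis add_le_cancel_left div_mult_mod_eq)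
  then show ?thesis using assms(1) by (auto simp: cell_term_def intro!: mult_left_mono)
qed

text \<open>Term \<open>j\<close> next drops after \<open>cell_period M (\<mu> j) - p mod cell_period M (\<mu> j)\<close> cells;
  in a safe cell this distance is large compared with \<open>t\<close> times its jump.\<close>
definition safe_cells :: "(nat \<Rightarrow> real) \<Rightarrow> (nat \<Rightarrow> nat) \<Rightarrow> nat \<Rightarrow> nat \<Rightarrow> real \<Rightarrow> nat set" where
  "safe_cells b \<mu> M n t = {p. p < 4 ^ (M + 1) \<and> (\<forall>j\<le>n.
     16 * t * 4 ^ (M + 1) * term_jump b \<mu> j \<le> real (cell_period M (\<mu> j) - p mod cell_period M (\<mu> j)))}"

lemma cell_value_almost_mono:
  assumes nonneg: "\<And>j. 0 \<le> b j"
    and halving: "\<And>j. 1 \<le> j \<Longrightarrow> term_jump b \<mu> (Suc j) \<le> term_jump b \<mu> j / 2"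
    and "0 < t" and safe: "p \<in> safe_cells b \<mu> M n t" and "p < q"
  shows "cell_value b \<mu> M n p - 3 * (real (q - p) / (16 * t * 4 ^ (M + 1))) \<le> cell_value b \<mu> M n q"
proof -
  let ?N = "\<lambda>j. cell_period M (\<mu> j)"
  define J where "J = {j \<in> {0..n}. p div ?N j \<noteq> q div ?N j}"
  define D where "D = real (q - p) / (16 * t * 4 ^ (M + 1))"
  have "J \<subseteq> {0..n}" by (auto simp: J_def)
  have jump_le_D: "term_jump b \<mu> j \<le> D" if "j \<in> J" for j
  proof -
    have "16 * t * 4 ^ (M + 1) * term_jump b \<mu> j \<le> real (?N j - p mod ?N j)"
      using safe that by (auto simp: safe_cells_def J_def)
    also have "\<dots> \<le> real (q - p)"
      using period_end_le_diff[OF \<open>p < q\<close>] that by (simp add: J_def)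
    finally show ?thesis using \<open>0 < t\<close> by (simp add: D_def field_simps)
  qed
  have termwise: "cell_term b \<mu> M j p - (if j \<in> J then term_jump b \<mu> j else 0) \<le> cell_term b \<mu> M j q"
    if "j \<in> {0..n}" for j
  proof (cases "j \<in> J")
    case True
    have "cell_term b \<mu> M j p \<le> term_jump b \<mu> j" "0 \<le> cell_term b \<mu> M j q"
      using cell_term_bounds nonneg by blast+
    then show ?thesis using True by simp
  next
    case False
    then show ?thesis
      using that cell_term_mono_in_period[of b j p q M \<mu>] nonneg[of j] \<open>p < q\<close> by (simp add: J_def)
  qed
  have "cell_value b \<mu> M n p - (\<Sum>j\<in>J. term_jump b \<mu> j)
      = (\<Sum>j = 0..n. cell_term b \<mu> M j p - (if j \<in> J then term_jump b \<mu> j else 0))"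
    using \<open>J \<subseteq> {0..n}\<close> by (simp add: cell_value_def sum_subtractf sum.If_cases Int_absorb1)
  also have "\<dots> \<le> cell_value b \<mu> M n q"
    unfolding cell_value_def by (rule sum_mono) (rule termwise)
  finally have "cell_value b \<mu> M n p - (\<Sum>j\<in>J. term_jump b \<mu> j) \<le> cell_value b \<mu> M n q" .
  moreover have "(\<Sum>j\<in>J. term_jump b \<mu> j) \<le> 3 * D"
    using nonneg jump_le_D \<open>0 < t\<close>
    by (intro sum_halving_bounded halving) (auto simp: J_def D_def term_jump_def)
  ultimately show ?thesis unfolding D_def by linarith
qed

lemma card_safe_cells:
  assumes nonneg: "\<And>j. 0 \<le> b j" and "0 < t" and exps: "\<And>j. j \<le> n \<Longrightarrow> \<mu> j \<le> M"
    and small: "48 * t * (\<Sum>j = 0..n. b j) \<le> 1"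
  shows "real (4 ^ (M + 1)) / 2 \<le> real (card (safe_cells b \<mu> M n t))"
proof -
  define P :: nat where "P = 4 ^ (M + 1)"
  define Bad where "Bad j = {p. p < P \<and> real (cell_period M (\<mu> j) - p mod cell_period M (\<mu> j))
      < 16 * t * 4 ^ (M + 1) * term_jump b \<mu> j}" for j
  have "{..<P} \<subseteq> safe_cells b \<mu> M n t \<union> (\<Union>j\<in>{0..n}. Bad j)"
    unfolding safe_cells_def Bad_def P_def by force
  moreover have "finite (safe_cells b \<mu> M n t)" "\<And>j. finite (Bad j)"
    unfolding safe_cells_def Bad_def by auto
  ultimately have "P \<le> card (safe_cells b \<mu> M n t \<union> (\<Union>j\<in>{0..n}. Bad j))"
    by (metis card_lessThan card_mono finite_UN_I finite_UnI finite_atLeastAtMost)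
  also have "\<dots> \<le> card (safe_cells b \<mu> M n t) + card (\<Union>j\<in>{0..n}. Bad j)"
    by (rule card_Un_le)
  also have "\<dots> \<le> card (safe_cells b \<mu> M n t) + (\<Sum>j = 0..n. card (Bad j))"
    using card_UN_le[of "{0..n}" Bad] by simp
  finally have count: "real P \<le> real (card (safe_cells b \<mu> M n t)) + (\<Sum>j = 0..n. real (card (Bad j)))"
    by (metis of_nat_add of_nat_le_iff of_nat_sum)
  have "real (card (Bad j)) \<le> 24 * t * b j * real P" if "j \<le> n" for j
  proof -
    have P_eq: "cell_period M (\<mu> j) * (2 * 4 ^ \<mu> j) = P"
      using cell_period_mult[OF exps[OF that]] by (simp add: P_def)
    have "0 \<le> 16 * t * 4 ^ (M + 1) * term_jump b \<mu> j"
      using nonneg[of j] \<open>0 < t\<close> by (simp add: term_jump_def)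
    moreover have "cell_period M (\<mu> j) dvd P" "0 < cell_period M (\<mu> j)"
      using P_eq by (auto simp: cell_period_def intro: dvd_triv_left[of _ "2 * 4 ^ \<mu> j", simplified])
    ultimately have "real (card (Bad j)) \<le> real (P div cell_period M (\<mu> j)) * (16 * t * 4 ^ (M + 1) * term_jump b \<mu> j)"
      unfolding Bad_def by (rule card_near_period_end_le)
    also have "P div cell_period M (\<mu> j) = 2 * 4 ^ \<mu> j"
      using P_eq \<open>0 < cell_period M (\<mu> j)\<close> by (metis nonzero_mult_div_cancel_left less_not_refl2)
    also have "real (2 * 4 ^ \<mu> j) * (16 * t * 4 ^ (M + 1) * term_jump b \<mu> j) = 24 * t * b j * real P"
      by (simp add: P_def term_jump_def)
    finally show ?thesis .
  qed
  then have "(\<Sum>j = 0..n. real (card (Bad j))) \<le> (\<Sum>j = 0..n. 24 * t * b j * real P)"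
    by (intro sum_mono) simp
  also have "\<dots> = (48 * t * (\<Sum>j = 0..n. b j)) * (real P / 2)"
    by (simp add: sum_distrib_left sum_distrib_right field_simps)
  also have "\<dots> \<le> 1 * (real P / 2)" by (rule mult_right_mono[OF small]) simp
  finally show ?thesis using count by (simp add: P_def)
qed

section \<open>Projections of the graph\<close>

definition cell_proj :: "(nat \<Rightarrow> real) \<Rightarrow> (nat \<Rightarrow> nat) \<Rightarrow> nat \<Rightarrow> nat \<Rightarrow> real \<Rightarrow> nat \<Rightarrow> real" where
  "cell_proj b \<mu> M n t p = real p / 4 ^ (M + 1) * cos t + cell_value b \<mu> M n p * sin t"

lemma cell_interval_subset_proj_graph:
  assumes exps: "\<And>j. j \<le> n \<Longrightarrow> \<mu> j \<le> M" and "p < 4 ^ (M + 1)" and cos_t: "1/2 \<le> cos t"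
  shows "{cell_proj b \<mu> M n t p ..< cell_proj b \<mu> M n t p + 1 / (4 * 4 ^ (M + 1))}
    \<subseteq> proj_dir t ` {(x, lacunary_sum b \<mu> n x) | x. x \<in> {0..1}}"
proof
  define P :: real where "P = 4 ^ (M + 1)"
  have "0 < P" by (simp add: P_def)
  have "real p + 1 \<le> P" using \<open>p < 4 ^ (M + 1)\<close> unfolding P_def
    by (metis Suc_leI add.commute of_nat_Suc of_nat_le_iff of_nat_numeral of_nat_power)
  fix v assume v: "v \<in> {cell_proj b \<mu> M n t p ..< cell_proj b \<mu> M n t p + 1 / (4 * 4 ^ (M + 1))}"
  define x where "x = (v - cell_value b \<mu> M n p * sin t) / cos t"
  have "0 < cos t" using cos_t by linarith
  have offset: "x - real p / P = (v - cell_proj b \<mu> M n t p) / cos t"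
    using \<open>0 < cos t\<close> unfolding x_def cell_proj_def P_def by (simp add: field_simps)
  have "0 \<le> v - cell_proj b \<mu> M n t p" "v - cell_proj b \<mu> M n t p < 1 / (4 * P)"
    using v by (auto simp: P_def)
  then have "0 \<le> x - real p / P" "x - real p / P < 1 / P"
    unfolding offset using \<open>0 < cos t\<close> cos_t \<open>0 < P\<close> by (auto simp: field_simps)
  then have lo: "real p / P \<le> x" and hi: "x < (real p + 1) / P"
    by (simp_all add: add_divide_distrib)
  moreover have "0 \<le> real p / P" "(real p + 1) / P \<le> 1" using \<open>real p + 1 \<le> P\<close> \<open>0 < P\<close> by auto
  ultimately have "x \<in> {0..1}" by auto
  moreover have "lacunary_sum b \<mu> n x = cell_value b \<mu> M n p"
    using lacunary_sum_on_cell[OF exps] lo hi by (simp add: P_def)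
  moreover have "v = proj_dir t (x, cell_value b \<mu> M n p)"
    using \<open>0 < cos t\<close> unfolding x_def proj_dir_def by (simp add: field_simps)
  ultimately show "v \<in> proj_dir t ` {(x, lacunary_sum b \<mu> n x) | x. x \<in> {0..1}}" by force
qed

lemma cell_proj_gap:
  assumes nonneg: "\<And>j. 0 \<le> b j"
    and halving: "\<And>j. 1 \<le> j \<Longrightarrow> term_jump b \<mu> (Suc j) \<le> term_jump b \<mu> j / 2"
    and "0 < t" "t \<le> 1" and safe: "p \<in> safe_cells b \<mu> M n t" and "p < q"
  shows "cell_proj b \<mu> M n t p + 1 / (4 * 4 ^ (M + 1)) \<le> cell_proj b \<mu> M n t q"
proof -
  define P :: real where "P = 4 ^ (M + 1)"
  define d where "d = real (q - p) / P"
  define \<Delta> where "\<Delta> = cell_value b \<mu> M n q - cell_value b \<mu> M n p"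
  have "0 < P" by (simp add: P_def)
  have "1 / P \<le> d" using \<open>p < q\<close> \<open>0 < P\<close> by (simp add: d_def divide_right_mono)
  then have "0 \<le> d" using \<open>0 < P\<close> by (meson less_imp_le order_trans zero_le_divide_1_iff)
  have cos_t: "1/2 \<le> cos t" and sin_t: "0 \<le> sin t" "sin t \<le> t"
    using small_angle_bounds \<open>0 < t\<close> \<open>t \<le> 1\<close> by auto
  have "- 3 * d / 16 \<le> \<Delta> * sin t"
  proof (cases "0 \<le> \<Delta>")
    case False
    have "- 3 * d / 16 \<le> \<Delta> * t"
      using cell_value_almost_mono[OF nonneg halving \<open>0 < t\<close> safe \<open>p < q\<close>] \<open>0 < t\<close>
      by (simp add: \<Delta>_def d_def P_def field_simps)
    also have "\<dots> \<le> \<Delta> * sin t" using False sin_t by (simp add: mult_left_mono_neg)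
    finally show ?thesis .
  next
    case True
    have "0 \<le> \<Delta> * sin t" using True sin_t by simp
    then show ?thesis using \<open>0 \<le> d\<close> by linarith
  qed
  moreover have "cell_proj b \<mu> M n t q - cell_proj b \<mu> M n t p = d * cos t + \<Delta> * sin t"
    using \<open>p < q\<close> by (simp add: cell_proj_def d_def \<Delta>_def P_def of_nat_diff diff_divide_distrib algebra_simps)
  moreover have "d / 2 \<le> d * cos t"
    using mult_left_mono[OF cos_t \<open>0 \<le> d\<close>] by simp
  ultimately have "5 * d / 16 \<le> cell_proj b \<mu> M n t q - cell_proj b \<mu> M n t p" by linarith
  moreover have "1 / (4 * P) \<le> 5 * d / 16" using \<open>1 / P \<le> d\<close> \<open>0 < P\<close> by (simp add: field_simps)
  ultimately show ?thesis by (simp add: P_def)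
qed

lemma proj_measure_ge:
  assumes nonneg: "\<And>j. 0 \<le> b j"
    and halving: "\<And>j. 1 \<le> j \<Longrightarrow> term_jump b \<mu> (Suc j) \<le> term_jump b \<mu> j / 2"
    and exps: "\<And>j. j \<le> n \<Longrightarrow> \<mu> j \<le> M"
    and "0 < t" "t \<le> 1" and small: "48 * t * (\<Sum>j = 0..n. b j) \<le> 1"
    and graph: "{(x, lacunary_sum b \<mu> n x) | x. x \<in> {0..1}} \<subseteq> E"
    and meas: "proj_dir t ` E \<in> sets lborel"
  shows "ennreal (1/8) \<le> emeasure lborel (proj_dir t ` E)"
proof -
  define P :: real where "P = 4 ^ (M + 1)"
  define G where "G = safe_cells b \<mu> M n t"
  define I where "I p = {cell_proj b \<mu> M n t p ..< cell_proj b \<mu> M n t p + 1 / (4 * P)}" for p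
  have "0 < P" by (simp add: P_def)
  have "I p \<subseteq> proj_dir t ` E" if "p \<in> G" for p
  proof -
    have "p < 4 ^ (M + 1)" using that by (simp add: G_def safe_cells_def)
    then show ?thesis
      using cell_interval_subset_proj_graph[OF exps _ small_angle_bounds(1)] graph \<open>0 < t\<close> \<open>t \<le> 1\<close>
      unfolding I_def P_def by (meson image_mono less_imp_le order_trans)
  qed
  then have "emeasure lborel (\<Union>p\<in>G. I p) \<le> emeasure lborel (proj_dir t ` E)"
    by (intro emeasure_mono[OF _ meas]) blast
  moreover have "disjoint_family_on I G"
    unfolding disjoint_family_on_def
  proof (intro ballI impI)
    have "I p \<inter> I q = {}" if "p \<in> G" "p < q" for p q
      using cell_proj_gap[OF nonneg halving \<open>0 < t\<close> \<open>t \<le> 1\<close>, of p M n q] that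
      by (auto simp: I_def P_def G_def)
    then show "I p \<inter> I q = {}" if "p \<in> G" "q \<in> G" "p \<noteq> q" for p q
      using that by (metis Int_commute linorder_neqE_nat)
  qed
  moreover have "finite G" by (simp add: G_def safe_cells_def)
  ultimately have "(\<Sum>p\<in>G. emeasure lborel (I p)) \<le> emeasure lborel (proj_dir t ` E)"
    by (subst sum_emeasure) (auto simp: I_def)
  moreover have "(\<Sum>p\<in>G. emeasure lborel (I p)) = ennreal (real (card G) / (4 * P))"
    using \<open>0 < P\<close> by (simp add: I_def ennreal_of_nat_eq_real_of_nat ennreal_mult'' flip: ennreal_mult)
  moreover have "1/8 \<le> real (card G) / (4 * P)"
    using card_safe_cells[OF nonneg \<open>0 < t\<close> exps small] \<open>0 < P\<close> by (simp add: G_def P_def field_simps)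
  ultimately show ?thesis by (metis ennreal_leI order_trans)
qed

lemma proj_dir_compact_measurable: "compact E \<Longrightarrow> proj_dir t ` E \<in> sets lborel"
proof -
  have "continuous_on UNIV (proj_dir t)" unfolding proj_dir_def by (intro continuous_intros)
  then show "compact E \<Longrightarrow> ?thesis"
    by (metis borel_compact compact_continuous_image continuous_on_subset sets_lborel top_greatest)
qed

lemma favard_length_ge:
  assumes "0 < t0" "t0 \<le> 2 * pi" "0 \<le> \<beta>"
    and bound: "\<And>t. t \<in> {0<..t0} \<Longrightarrow> ennreal \<beta> \<le> emeasure lborel (proj_dir t ` E)"
  shows "ennreal (\<beta> * t0 / (2 * pi)) \<le> favard_length E"
proof -
  have "ennreal \<beta> * ennreal t0 = (\<integral>\<^sup>+ t. ennreal \<beta> * indicator {0<..t0} t \<partial>lborel)"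
    using \<open>0 < t0\<close> by (simp add: nn_integral_cmult_indicator)
  also have "\<dots> \<le> (\<integral>\<^sup>+ t. indicator {0..2*pi} t * emeasure lborel (proj_dir t ` E) \<partial>lborel)"
    using bound \<open>t0 \<le> 2 * pi\<close> by (intro nn_integral_mono) (auto split: split_indicator)
  finally have "ennreal (1 / (2 * pi)) * (ennreal \<beta> * ennreal t0) \<le> favard_length E"
    unfolding favard_length_def by (rule mult_left_mono) simp
  then show ?thesis using \<open>0 \<le> \<beta>\<close> \<open>0 < t0\<close> by (simp add: ennreal_mult[symmetric] field_simps)
qed

section \<open>The sets E_n\<close>

definition coef :: "(nat \<Rightarrow> real) \<Rightarrow> nat \<Rightarrow> real" where
  "coef g j = (if j = 0 then 1 else a_seq g j)"

definition expo :: "(nat \<Rightarrow> nat) \<Rightarrow> nat \<Rightarrow> nat" where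
  "expo m j = (if j = 0 then 0 else m j)"

lemma f_n_eq_lacunary_sum: "f_n g m n = lacunary_sum (coef g) (expo m) n"
proof
  fix x
  have "lacunary_sum (coef g) (expo m) n x
      = step_f (2 * x) + (\<Sum>j = Suc 0..n. coef g j / 4 ^ expo m j * step_f (2 * 4 ^ expo m j * x))"
    by (simp add: lacunary_sum_def sum.atLeast_Suc_atMost coef_def expo_def)
  also have "\<dots> = f_n g m n x"
    unfolding f_n_def by (auto intro!: sum.cong simp: coef_def expo_def)
  finally show "f_n g m n x = lacunary_sum (coef g) (expo m) n x" ..
qed

lemma one_le_sum_coef:
  assumes "\<And>j. 0 \<le> coef g j"
  shows "1 \<le> (\<Sum>j = 0..n. coef g j)"
proof -
  have "0 \<le> (\<Sum>j = Suc 0..n. coef g j)" by (rule sum_nonneg) (rule assms)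
  then show ?thesis by (simp add: sum.atLeast_Suc_atMost coef_def)
qed

lemma compact_E_set:
  assumes "\<And>j. 0 \<le> coef g j"
  shows "compact (E_set g m n)"
proof -
  define X where "X = {(x, f_n g m n x + s) | x s. x \<in> {0..1} \<and> s \<in> {0..1 / 4 ^ m n}}"
  have "X \<subseteq> {0..1} \<times> {0..(\<Sum>j = 0..n. coef g j) + 1}"
  proof
    fix z assume "z \<in> X"
    then obtain x s where z: "z = (x, f_n g m n x + s)" "x \<in> {0..1}" "s \<in> {0..1 / 4 ^ m n}"
      unfolding X_def by blast
    have "1 / 4 ^ m n \<le> (1::real)" by simp
    then have "s \<le> 1" using z(3) by (meson atLeastAtMost_iff order_trans)
    then show "z \<in> {0..1} \<times> {0..(\<Sum>j = 0..n. coef g j) + 1}"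
      using z lacunary_sum_bounds[where b = "coef g" and \<mu> = "expo m" and n = n and x = x, OF assms]
      by (auto simp: f_n_eq_lacunary_sum)
  qed
  moreover have "bounded ({0..1::real} \<times> {0..(\<Sum>j = 0..n. coef g j) + 1})"
    by (intro compact_imp_bounded compact_Times compact_Icc)
  ultimately have "bounded X" by (rule bounded_subset[rotated])
  then show ?thesis unfolding E_set_def X_def[symmetric] by simp
qed

lemma favard_length_E_set_ge:
  assumes nonneg: "\<And>j. 0 \<le> coef g j"
    and halving: "\<And>j. 1 \<le> j \<Longrightarrow> term_jump (coef g) (expo m) (Suc j) \<le> term_jump (coef g) (expo m) j / 2"
    and exps: "\<And>j. j \<le> n \<Longrightarrow> expo m j \<le> m n"
  shows "ennreal (1 / (768 * pi * (\<Sum>j = 0..n. coef g j))) \<le> favard_length (E_set g m n)"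
proof -
  define B where "B = (\<Sum>j = 0..n. coef g j)"
  define t0 where "t0 = 1 / (48 * B)"
  have "1 \<le> B" unfolding B_def by (rule one_le_sum_coef[OF nonneg])
  then have "0 < t0" "t0 \<le> 1" by (simp_all add: t0_def)
  have graph: "{(x, lacunary_sum (coef g) (expo m) n x) | x. x \<in> {0..1}} \<subseteq> E_set g m n"
    unfolding E_set_def f_n_eq_lacunary_sum by (force intro: closure_subset[THEN subsetD])
  have "ennreal (1/8) \<le> emeasure lborel (proj_dir t ` E_set g m n)" if "t \<in> {0<..t0}" for t
  proof (rule proj_measure_ge[OF nonneg halving exps _ _ _ graph])
    show "0 < t" "t \<le> 1" using that \<open>t0 \<le> 1\<close> by auto
    show "48 * t * (\<Sum>j = 0..n. coef g j) \<le> 1"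
      using that \<open>1 \<le> B\<close> by (simp add: t0_def B_def field_simps)
    show "proj_dir t ` E_set g m n \<in> sets lborel"
      by (rule proj_dir_compact_measurable[OF compact_E_set[OF nonneg]])
  qed
  then have "ennreal (1/8 * t0 / (2 * pi)) \<le> favard_length (E_set g m n)"
    using \<open>0 < t0\<close> \<open>t0 \<le> 1\<close> pi_gt3 by (intro favard_length_ge) auto
  then show ?thesis by (simp add: t0_def B_def mult_ac)
qed

lemma a_seq_nonneg:
  assumes "0 < g 1" and "\<And>k. 1 \<le> k \<Longrightarrow> g k < g (Suc k)" and "1 \<le> k"
  shows "0 \<le> a_seq g k"
proof (cases "k = 1")
  case False
  then have "g (k - 1) < g k" using assms(2)[of "k - 1"] \<open>1 \<le> k\<close> by simp
  then show ?thesis using False by (simp add: a_seq_def)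
qed (use assms in \<open>simp add: a_seq_def\<close>)

lemma a_seq_le_one: "2 \<le> k \<Longrightarrow> a_seq g k \<le> 1"
  by (simp add: a_seq_def)

lemma coef_nonneg: "(\<And>k. 1 \<le> k \<Longrightarrow> 0 \<le> a_seq g k) \<Longrightarrow> 0 \<le> coef g j"
  by (cases "j = 0") (auto simp: coef_def)

lemma term_jump_coef_halving:
  assumes "1 \<le> j" and "a_seq g (Suc j) \<le> 1"
    and lacunary: "1000 * (1 / 4 ^ m (Suc j)) \<le> a_seq g j * (1 / 4 ^ m j)"
  shows "term_jump (coef g) (expo m) (Suc j) \<le> term_jump (coef g) (expo m) j / 2"
proof -
  have "term_jump (coef g) (expo m) (Suc j) \<le> 3/4 * (1 / 4 ^ m (Suc j))"
    using assms(2) by (simp add: term_jump_def coef_def expo_def divide_right_mono)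
  also have "\<dots> \<le> 3/4 * (a_seq g j * (1 / 4 ^ m j) / 1000)" using lacunary by simp
  also have "\<dots> \<le> 3/4 * (a_seq g j * (1 / 4 ^ m j)) / 2"
  proof -
    have "0 \<le> 1000 * (1 / 4 ^ m (Suc j) :: real)" by simp
    then have "0 \<le> a_seq g j * (1 / 4 ^ m j)" using lacunary by linarith
    then show ?thesis by simp
  qed
  also have "\<dots> = term_jump (coef g) (expo m) j / 2"
    using \<open>1 \<le> j\<close> by (simp add: term_jump_def coef_def expo_def)
  finally show ?thesis .
qed

lemma expo_le:
  assumes "\<And>k. 2 \<le> k \<Longrightarrow> m (k - 1) < m k" and "j \<le> n"
  shows "expo m j \<le> m n"
proof (cases "j = 0")
  case False
  have "m (Suc k) \<le> m (Suc (Suc k))" for k using assms(1)[of "Suc (Suc k)"] by simp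
  then have "m (Suc (j - 1)) \<le> m (Suc (n - 1))"
    using lift_Suc_mono_le[of "\<lambda>k. m (Suc k)"] \<open>j \<le> n\<close> diff_le_mono by blast
  then show ?thesis using False \<open>j \<le> n\<close> by (simp add: expo_def)
qed (simp add: expo_def)

lemma sum_coef_le:
  assumes a_nonneg: "\<And>k. 1 \<le> k \<Longrightarrow> 0 \<le> a_seq g k" and "2 \<le> n"
  shows "g 1 * (\<Sum>j = 0..n. coef g j) \<le> (g 1 + 2) * (\<Sum>k = 1..n - 1. a_seq g k)"
proof -
  define S where "S = (\<Sum>k = 1..n - 1. a_seq g k)"
  have "(\<Sum>k = 1..Suc (n - 1). a_seq g k) = S + a_seq g (Suc (n - 1))"
    by (simp add: S_def)
  then have sum_eq: "(\<Sum>j = 0..n. coef g j) = 1 + S + a_seq g n"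
    using \<open>2 \<le> n\<close> by (simp add: sum.atLeast_Suc_atMost coef_def)
  have "S = a_seq g 1 + (\<Sum>k = 2..n - 1. a_seq g k)"
    using \<open>2 \<le> n\<close> by (simp add: S_def sum.atLeast_Suc_atMost numeral_2_eq_2)
  moreover have "0 \<le> (\<Sum>k = 2..n - 1. a_seq g k)" using a_nonneg by (intro sum_nonneg) simp
  ultimately have "g 1 \<le> S" by (simp add: a_seq_def)
  have "0 \<le> g 1" using a_nonneg[of 1] by (simp add: a_seq_def)
  moreover have "a_seq g n \<le> 1" using a_seq_le_one \<open>2 \<le> n\<close> by simp
  ultimately have "g 1 * (1 + S + a_seq g n) \<le> g 1 * (S + 2)"
    by (intro mult_left_mono) auto
  also have "\<dots> \<le> (g 1 + 2) * S" using \<open>g 1 \<le> S\<close> by (simp add: algebra_simps)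
  finally show ?thesis by (simp add: sum_eq S_def)
qed

theorem proposition4:
  fixes g :: "nat \<Rightarrow> real" and m :: "nat \<Rightarrow> nat"
  assumes g_pos: "\<And>k. k \<ge> 1 \<Longrightarrow> g k > 0"
    and g_mono: "\<And>k l. 1 \<le> k \<Longrightarrow> k < l \<Longrightarrow> g k < g l"
    and g_lim: "filterlim g at_top sequentially"
    and m_pos: "\<And>k. k \<ge> 1 \<Longrightarrow> m k > 0"
    and m_mono: "\<And>k. k \<ge> 2 \<Longrightarrow> m k > m (k - 1)"
    and m_cond1: "\<And>k. k \<ge> 2 \<Longrightarrow>
        1000 * (1 / 4 ^ m k) \<le> a_seq g k * (1 / 4 ^ m (k - 1))"
    and m_cond2: "\<And>k. k \<ge> 2 \<Longrightarrow>
        1000 * (1 / 4 ^ m k) \<le> a_seq g (k - 1) * (1 / 4 ^ m (k - 1))"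
  shows "\<exists>c > 0. \<forall>n \<ge> 2.
           ennreal (c / (\<Sum>k = 1..n - 1. a_seq g k)) \<le> favard_length (E_set g m n)"
proof -
  have a_nonneg: "\<And>k. 1 \<le> k \<Longrightarrow> 0 \<le> a_seq g k"
    using a_seq_nonneg[of g] g_pos[of 1] g_mono by simp
  have halving: "term_jump (coef g) (expo m) (Suc j) \<le> term_jump (coef g) (expo m) j / 2"
    if "1 \<le> j" for j
    using term_jump_coef_halving[OF that a_seq_le_one] m_cond2[of "Suc j"] that by simp
  define c where "c = g 1 / (768 * pi * (g 1 + 2))"
  have "0 < g 1" using g_pos by simp
  have "ennreal (c / (\<Sum>k = 1..n - 1. a_seq g k)) \<le> favard_length (E_set g m n)" if "2 \<le> n" for n
  proof -
    define S where "S = (\<Sum>k = 1..n - 1. a_seq g k)"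
    define B where "B = (\<Sum>j = 0..n. coef g j)"
    have bound: "ennreal (1 / (768 * pi * B)) \<le> favard_length (E_set g m n)"
      unfolding B_def
      by (rule favard_length_E_set_ge[OF coef_nonneg[OF a_nonneg] halving expo_le[where m = m, OF m_mono]])
    have key: "g 1 * B \<le> (g 1 + 2) * S" unfolding B_def S_def by (rule sum_coef_le[OF a_nonneg \<open>2 \<le> n\<close>])
    have "1 \<le> B" unfolding B_def by (rule one_le_sum_coef[OF coef_nonneg[OF a_nonneg]])
    then have "0 < g 1 * B" using \<open>0 < g 1\<close> by simp
    then have "0 < S" using key \<open>0 < g 1\<close> mult_nonneg_nonpos[of "g 1 + 2" S] by linarith
    have "g 1 / (768 * pi * ((g 1 + 2) * S)) \<le> g 1 / (768 * pi * (g 1 * B))"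
      using key \<open>0 < g 1\<close> \<open>1 \<le> B\<close> \<open>0 < S\<close> by (intro divide_left_mono mult_pos_pos) auto
    then have "c / S \<le> 1 / (768 * pi * B)" using \<open>0 < g 1\<close> by (simp add: c_def mult_ac)
    with bound show ?thesis unfolding S_def by (meson ennreal_leI order_trans)
  qed
  moreover have "0 < c" using \<open>0 < g 1\<close> by (simp add: c_def)
  ultimately show ?thesis by blast
qed

end
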